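(* Let $R$ be a commutative ring, $M$ an $R$-module, $C$ an $R$-linear relation on $M$, and $(X\mid\rho)$ a reduction of $(M,C)$. Then $\rho$ defines a morphism $(X,\mathrm{graph}(T_X))\to(M,C)$ in $\mathrm{Rel}_R$, where $T_X(x)=Tx$. Furthermore, if $(X\mid\rho)$ meets in the radical, then there is a short exact sequence of $R[T,T^{-1}]$-modules $0\to\mathrm{rad}(X)\to X\to C^\sharp/C^\flat\to0$, where the first map is the inclusion and the second is $x\mapsto\rho(x)+C^\flat$.
   Context: An $R$-linear relation on $M$ is a submodule $C\subseteq M\oplus M$; $Cm=\{m':(m,m')\in C\}$, $C^{-1}=\{(y,x):(x,y)\in C\}$, $\mathrm{graph}(f)=\{(x,f(x))\}$. $\mathrm{Rel}_R$: objects pairs $(M,C)$, morphisms $(L,B)\to(M,C)$ the $R$-linear $f$ with $(f(x),f(y))\in C$ whenever $(x,y)\in B$. $C''$: the $m\in M$ admitting $(m_n)_{n\in\mathbb{N}}$ with $m_0=m$, $m_{n+1}\in Cm_n$ for all $n$; $C'$: those admitting such a sequence with $m_n=0$ for $n\gg0$; $C^\sharp=C''\cap(C^{-1})''$, $C^\flat=C''\cap(C^{-1})'+(C^{-1})''\cap C'$. $C^\sharp/C^\flat$ is an $R[T,T^{-1}]$-module with $T$ acting by the automorphism $m+C^\flat\mapsto m'+C^\flat$ where $m'\in C^\sharp\cap(C^\flat+Cm)$. A reduction of $(M,C)$ is a pair $(X\mid\rho)$, $X$ an $R[T,T^{-1}]$-module, $\rho\colon X\to M$ $R$-linear, with $C^\sharp=C^\flat+\mathrm{im}(\rho)$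 and $\rho(Tx)\in C\rho(x)$ for all $x$; it meets in the radical if $\{x\in X:\rho(x)\in C^\flat\}=\mathrm{rad}(X)$, the radical of $X$ as an $R$-module. *)

theory Defs
  imports Complex_Main
begin

text \<open>Modules over a commutative ring R are modelled with the Main locale
  module (scale function), the module being the whole carrier type.\<close>

definition linrel :: "('r::comm_ring_1 \<Rightarrow> 'm::ab_group_add \<Rightarrow> 'm) \<Rightarrow> ('m \<times> 'm) set \<Rightarrow> bool" where
  "linrel s C \<longleftrightarrow> (0, 0) \<in> C
     \<and> (\<forall>a b c d. (a, b) \<in> C \<longrightarrow> (c, d) \<in> C \<longrightarrow> (a + c, b + d) \<in> C)
     \<and> (\<forall>r a b. (a, b) \<in> C \<longrightarrow> (s r a, s r b) \<in> C)"

definition graph :: "('a \<Rightarrow> 'b) \<Rightarrow> ('a \<times> 'b) set" where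
  "graph f = {(x, f x) | x. True}"

definition rel_morphism ::
  "('r::comm_ring_1 \<Rightarrow> 'l::ab_group_add \<Rightarrow> 'l) \<Rightarrow> ('l \<times> 'l) set \<Rightarrow>
   ('r \<Rightarrow> 'm::ab_group_add \<Rightarrow> 'm) \<Rightarrow> ('m \<times> 'm) set \<Rightarrow> ('l \<Rightarrow> 'm) \<Rightarrow> bool" where
  "rel_morphism sL B sM C f \<longleftrightarrow> module_hom sL sM f \<and> (\<forall>x y. (x, y) \<in> B \<longrightarrow> (f x, f y) \<in> C)"

definition dprime :: "('m \<times> 'm) set \<Rightarrow> 'm set" where
  "dprime C = {m. \<exists>f :: nat \<Rightarrow> 'm. f 0 = m \<and> (\<forall>n. (f n, f (Suc n)) \<in> C)}"

definition sprime :: "('m::zero \<times> 'm) set \<Rightarrow> 'm set" where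
  "sprime C = {m. \<exists>f :: nat \<Rightarrow> 'm. f 0 = m \<and> (\<forall>n. (f n, f (Suc n)) \<in> C)
                    \<and> (\<exists>N. \<forall>n\<ge>N. f n = 0)}"

definition set_plus :: "'m::plus set \<Rightarrow> 'm set \<Rightarrow> 'm set" where
  "set_plus A B = {a + b | a b. a \<in> A \<and> b \<in> B}"

definition Csharp :: "('m \<times> 'm) set \<Rightarrow> 'm set" where
  "Csharp C = dprime C \<inter> dprime (C\<inverse>)"

definition Cflat :: "('m::monoid_add \<times> 'm) set \<Rightarrow> 'm set" where
  "Cflat C = set_plus (dprime C \<inter> sprime (C\<inverse>)) (dprime (C\<inverse>) \<inter> sprime C)"

text \<open>The quotient C^sharp / C^flat, realised as the set of cosets m + C^flat.\<close>
definition coset :: "('m::monoid_add \<times> 'm) set \<Rightarrow> 'm \<Rightarrow> 'm set" where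
  "coset C m = {m + c | c. c \<in> Cflat C}"

definition quot_carrier :: "('m::monoid_add \<times> 'm) set \<Rightarrow> 'm set set" where
  "quot_carrier C = coset C ` Csharp C"

text \<open>The action of T on C^sharp/C^flat: the class m + C^flat is sent to the class of
  any m' in C^sharp \<inter> (C^flat + C m); as a set this is the union over all representatives.\<close>
definition quot_T :: "('m::monoid_add \<times> 'm) set \<Rightarrow> 'm set \<Rightarrow> 'm set" where
  "quot_T C q = {m'. m' \<in> Csharp C \<and> (\<exists>m\<in>q. m' \<in> set_plus (Cflat C) (C `` {m}))}"

text \<open>An R[T,T^-1]-module: an R-module with an R-linear automorphism T.\<close>
definition laurent_module :: "('r::comm_ring_1 \<Rightarrow> 'x::ab_group_add \<Rightarrow> 'x) \<Rightarrow> ('x \<Rightarrow> 'x) \<Rightarrow> bool" where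
  "laurent_module s T \<longleftrightarrow> module s \<and> module_hom s s T \<and> bij T"

definition reduction ::
  "('r::comm_ring_1 \<Rightarrow> 'm::ab_group_add \<Rightarrow> 'm) \<Rightarrow> ('m \<times> 'm) set \<Rightarrow>
   ('r \<Rightarrow> 'x::ab_group_add \<Rightarrow> 'x) \<Rightarrow> ('x \<Rightarrow> 'x) \<Rightarrow> ('x \<Rightarrow> 'm) \<Rightarrow> bool" where
  "reduction sM C sX T \<rho> \<longleftrightarrow> laurent_module sX T \<and> module_hom sX sM \<rho>
     \<and> Csharp C = set_plus (Cflat C) (range \<rho>)
     \<and> (\<forall>x. \<rho> (T x) \<in> C `` {\<rho> x})"

text \<open>Radical of an R-module (whole type): intersection of all maximal submodules
  (the whole module if there are none).\<close>
definition maximal_submodule :: "('r::comm_ring_1 \<Rightarrow> 'x::ab_group_add \<Rightarrow> 'x) \<Rightarrow> 'x set \<Rightarrow> bool" where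
  "maximal_submodule s N \<longleftrightarrow> module.subspace s N \<and> N \<noteq> UNIV
     \<and> (\<forall>N'. module.subspace s N' \<longrightarrow> N \<subseteq> N' \<longrightarrow> N' = N \<or> N' = UNIV)"

definition rad :: "('r::comm_ring_1 \<Rightarrow> 'x::ab_group_add \<Rightarrow> 'x) \<Rightarrow> 'x set" where
  "rad s = \<Inter> {N. maximal_submodule s N}"

definition meets_in_radical ::
  "('m::ab_group_add \<times> 'm) set \<Rightarrow> ('r::comm_ring_1 \<Rightarrow> 'x::ab_group_add \<Rightarrow> 'x) \<Rightarrow> ('x \<Rightarrow> 'm) \<Rightarrow> bool" where
  "meets_in_radical C sX \<rho> \<longleftrightarrow> {x. \<rho> x \<in> Cflat C} = rad sX"

end

theory Submission
  imports Defs
begin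

text \<open>The heart of the matter is that \<open>C\<^sup>\<flat>\<close> is stable under \<open>C\<close> inside
  \<open>C\<^sup>\<sharp>\<close>: if \<open>c \<in> C\<^sup>\<flat>\<close>, \<open>d \<in> C\<^sup>\<sharp>\<close> and \<open>(c, d) \<in> C\<close>, then
  \<open>d \<in> C\<^sup>\<flat>\<close>. Indeed, shifting the sequences that witness the two summands of \<open>c\<close>
  gives some \<open>e \<in> C\<^sup>\<flat>\<close> with \<open>(c, e) \<in> C\<close>; then \<open>(0, d - e) \<in> C\<close>, so
  \<open>d - e \<in> C'' \<inter> (C\<^sup>-\<^sup>1)'\<close>. Applied to \<open>C\<close> and \<open>C\<^sup>-\<^sup>1\<close> this shows that \<open>T\<close>
  is well defined on \<open>C\<^sup>\<sharp>/C\<^sup>\<flat>\<close> and that \<open>\<rho>\<^sup>-\<^sup>1(C\<^sup>\<flat>)\<close>, which is \<open>rad X\<close>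
  when the reduction meets in the radical, is \<open>T\<close>-invariant in both directions. Surjectivity
  onto \<open>C\<^sup>\<sharp>/C\<^sup>\<flat>\<close> is the equation \<open>C\<^sup>\<sharp> = C\<^sup>\<flat> + im \<rho>\<close>.\<close>

lemma set_plus_commute: "set_plus A B = set_plus B (A :: 'a::ab_semigroup_add set)"
  unfolding set_plus_def by (auto; metis add.commute)

lemma Cflat_converse: "Cflat (C\<inverse>) = Cflat (C :: ('a::ab_group_add \<times> 'a) set)"
  unfolding Cflat_def converse_converse by (rule set_plus_commute)

lemma Csharp_converse: "Csharp (C\<inverse>) = Csharp C"
  unfolding Csharp_def by auto

lemma sprime_subset_dprime: "sprime C \<subseteq> dprime C"
  unfolding sprime_def dprime_def by auto

lemma dprime_successor:
  assumes "m \<in> dprime C" obtains m' where "(m, m') \<in> C" "m' \<in> dprime C"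
proof -
  from assms obtain f where "f 0 = m" "\<forall>n. (f n, f (Suc n)) \<in> C"
    unfolding dprime_def by blast
  then show thesis
    by (intro that[of "f 1"]) (auto simp: dprime_def intro!: exI[of _ "\<lambda>n. f (Suc n)"])
qed

lemma sprime_successor:
  assumes "m \<in> sprime C" obtains m' where "(m, m') \<in> C" "m' \<in> sprime C"
proof -
  from assms obtain f N where "f 0 = m" "\<forall>n. (f n, f (Suc n)) \<in> C" "\<forall>n\<ge>N. f n = 0"
    unfolding sprime_def by blast
  then show thesis
    by (intro that[of "f 1"]) (auto simp: sprime_def intro!: exI[of _ "\<lambda>n. f (Suc n)"] exI[of _ N])
qed

lemma dprime_predecessor:
  assumes "(m, m') \<in> C" "m' \<in> dprime C" shows "m \<in> dprime C"
proof -
  from assms obtain f where "f 0 = m'" "\<forall>n. (f n, f (Suc n)) \<in> C"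
    unfolding dprime_def by blast
  with assms(1) show ?thesis unfolding dprime_def
    by (intro CollectI exI[of _ "case_nat m f"]) (auto split: nat.split)
qed

lemma sprime_predecessor:
  assumes "(m, m') \<in> C" "m' \<in> sprime C" shows "m \<in> sprime C"
proof -
  from assms obtain f N where "f 0 = m'" "\<forall>n. (f n, f (Suc n)) \<in> C" "\<forall>n\<ge>N. f n = 0"
    unfolding sprime_def by blast
  with assms(1) show ?thesis unfolding sprime_def
    by (intro CollectI exI[of _ "case_nat m f"] conjI exI[of _ "Suc N"]) (auto split: nat.split)
qed

context module
begin

lemma linrel_zero: "linrel scale C \<Longrightarrow> (0, 0) \<in> C"
  unfolding linrel_def by blast

lemma linrel_add: "linrel scale C \<Longrightarrow> (a, b) \<in> C \<Longrightarrow> (c, d) \<in> C \<Longrightarrow> (a + c, b + d) \<in> C"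
  unfolding linrel_def by blast

lemma linrel_scale: "linrel scale C \<Longrightarrow> (a, b) \<in> C \<Longrightarrow> (r *s a, r *s b) \<in> C"
  unfolding linrel_def by blast

lemma linrel_diff: "linrel scale C \<Longrightarrow> (a, b) \<in> C \<Longrightarrow> (c, d) \<in> C \<Longrightarrow> (a - c, b - d) \<in> C"
  using linrel_add[of C a b "(-1) *s c" "(-1) *s d"] linrel_scale[of C c d "-1"] by simp

lemma linrel_converse: "linrel scale C \<Longrightarrow> linrel scale (C\<inverse>)"
  unfolding linrel_def by auto

lemma subspace_dprime:
  assumes "linrel scale C" shows "subspace (dprime C)"
  unfolding subspace_def
proof (intro conjI ballI allI)
  show "0 \<in> dprime C"
    using linrel_zero[OF assms] by (auto simp: dprime_def intro!: exI[of _ "\<lambda>_. 0"])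
next
  fix r x assume "x \<in> dprime C"
  then obtain f where "f 0 = x" "\<forall>n. (f n, f (Suc n)) \<in> C" unfolding dprime_def by blast
  then show "r *s x \<in> dprime C"
    using linrel_scale[OF assms] by (auto simp: dprime_def intro!: exI[of _ "\<lambda>n. r *s f n"])
next
  fix x y assume "x \<in> dprime C" "y \<in> dprime C"
  then obtain f g where "f 0 = x" "\<forall>n. (f n, f (Suc n)) \<in> C" "g 0 = y" "\<forall>n. (g n, g (Suc n)) \<in> C"
    unfolding dprime_def by blast
  then show "x + y \<in> dprime C"
    using linrel_add[OF assms] by (auto simp: dprime_def intro!: exI[of _ "\<lambda>n. f n + g n"])
qed

lemma subspace_sprime:
  assumes "linrel scale C" shows "subspace (sprime C)"
  unfolding subspace_def
proof (intro conjI ballI allI)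
  show "0 \<in> sprime C"
    using linrel_zero[OF assms] by (auto simp: sprime_def intro!: exI[of _ "\<lambda>_. 0"])
next
  fix r x assume "x \<in> sprime C"
  then obtain f N where "f 0 = x" "\<forall>n. (f n, f (Suc n)) \<in> C" "\<forall>n\<ge>N. f n = 0"
    unfolding sprime_def by blast
  then show "r *s x \<in> sprime C"
    using linrel_scale[OF assms]
    by (auto simp: sprime_def intro!: exI[of _ "\<lambda>n. r *s f n"] exI[of _ N])
next
  fix x y assume "x \<in> sprime C" "y \<in> sprime C"
  then obtain f g N K where "f 0 = x" "\<forall>n. (f n, f (Suc n)) \<in> C" "\<forall>n\<ge>N. f n = 0"
    and "g 0 = y" "\<forall>n. (g n, g (Suc n)) \<in> C" "\<forall>n\<ge>K. g n = 0"
    unfolding sprime_def by blast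
  then show "x + y \<in> sprime C"
    using linrel_add[OF assms]
    by (auto simp: sprime_def intro!: exI[of _ "\<lambda>n. f n + g n"] exI[of _ "max N K"])
qed

lemma subspace_set_plus:
  assumes "subspace A" "subspace B" shows "subspace (set_plus A B)"
  unfolding subspace_def set_plus_def
proof (intro conjI ballI allI)
  show "0 \<in> {a + b |a b. a \<in> A \<and> b \<in> B}"
    using assms subspace_0 by force
next
  fix r x assume "x \<in> {a + b |a b. a \<in> A \<and> b \<in> B}"
  then obtain a b where "x = a + b" "a \<in> A" "b \<in> B" by blast
  then show "r *s x \<in> {a + b |a b. a \<in> A \<and> b \<in> B}"
    using assms subspace_scale by (force simp: scale_right_distrib)
next
  fix x y assume "x \<in> {a + b |a b. a \<in> A \<and> b \<in> B}" "y \<in> {a + b |a b. a \<in> A \<and> b \<in> B}"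
  then obtain a b a' b' where "x = a + b" "y = a' + b'" "a \<in> A" "a' \<in> A" "b \<in> B" "b' \<in> B"
    by blast
  then show "x + y \<in> {a + b |a b. a \<in> A \<and> b \<in> B}"
    using assms subspace_add by (intro CollectI exI[of _ "a + a'"] exI[of _ "b + b'"]) (auto simp: ac_simps)
qed

lemma subspace_Csharp: "linrel scale C \<Longrightarrow> subspace (Csharp C)"
  unfolding Csharp_def by (intro subspace_inter subspace_dprime linrel_converse)

lemma subspace_Cflat: "linrel scale C \<Longrightarrow> subspace (Cflat C)"
  unfolding Cflat_def
  by (intro subspace_set_plus subspace_inter subspace_dprime subspace_sprime linrel_converse)

lemma Cflat_subset_Csharp:
  assumes "linrel scale C" shows "Cflat C \<subseteq> Csharp C"
proof
  fix x assume "x \<in> Cflat C"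
  then obtain a b where "x = a + b" "a \<in> Csharp C" "b \<in> Csharp C"
    using sprime_subset_dprime unfolding Cflat_def Csharp_def set_plus_def by blast
  then show "x \<in> Csharp C" using subspace_add[OF subspace_Csharp[OF assms]] by simp
qed

lemma dprime_inter_sprime_converse_subset_Cflat:
  assumes "linrel scale C" shows "dprime C \<inter> sprime (C\<inverse>) \<subseteq> Cflat C"
proof
  fix x assume "x \<in> dprime C \<inter> sprime (C\<inverse>)"
  moreover have "0 \<in> dprime (C\<inverse>) \<inter> sprime C"
    using subspace_0[OF subspace_dprime[OF linrel_converse[OF assms]]]
      subspace_0[OF subspace_sprime[OF assms]] by blast
  ultimately have "x + 0 \<in> Cflat C" unfolding Cflat_def set_plus_def by blast
  then show "x \<in> Cflat C" by simp
qed

lemma Cflat_successor: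
  assumes "linrel scale C" "c \<in> Cflat C" obtains e where "(c, e) \<in> C" "e \<in> Cflat C"
proof -
  from assms(2) obtain a b where c: "c = a + b"
    and a: "a \<in> dprime C" "a \<in> sprime (C\<inverse>)" and b: "b \<in> dprime (C\<inverse>)" "b \<in> sprime C"
    unfolding Cflat_def set_plus_def by blast
  from a(1) obtain a' where a': "(a, a') \<in> C" "a' \<in> dprime C" by (rule dprime_successor)
  from b(2) obtain b' where b': "(b, b') \<in> C" "b' \<in> sprime C" by (rule sprime_successor)
  have "a' \<in> sprime (C\<inverse>)" using sprime_predecessor[of a' a "C\<inverse>"] a'(1) a(2) by simp
  moreover have "b' \<in> dprime (C\<inverse>)" using dprime_predecessor[of b' b "C\<inverse>"] b'(1) b(1) by simp
  ultimately have "a' + b' \<in> Cflat C"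
    using a'(2) b'(2) unfolding Cflat_def set_plus_def by blast
  moreover have "(c, a' + b') \<in> C" using linrel_add[OF assms(1) a'(1) b'(1)] c by simp
  ultimately show thesis by (rule that[rotated])
qed

lemma Cflat_step:
  assumes L: "linrel scale C" and "c \<in> Cflat C" "d \<in> Csharp C" "(c, d) \<in> C"
  shows "d \<in> Cflat C"
proof -
  obtain e where e: "(c, e) \<in> C" "e \<in> Cflat C" by (rule Cflat_successor[OF L \<open>c \<in> Cflat C\<close>])
  have "(0, d - e) \<in> C" using linrel_diff[OF L \<open>(c, d) \<in> C\<close> e(1)] by simp
  then have "d - e \<in> sprime (C\<inverse>)"
    using sprime_predecessor[of "d - e" 0 "C\<inverse>"] subspace_0[OF subspace_sprime[OF linrel_converse[OF L]]]
    by simp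
  moreover have "d - e \<in> dprime C"
    using subspace_diff[OF subspace_Csharp[OF L] \<open>d \<in> Csharp C\<close>] e(2) Cflat_subset_Csharp[OF L]
    unfolding Csharp_def by blast
  ultimately have "d - e \<in> Cflat C" using dprime_inter_sprime_converse_subset_Cflat[OF L] by blast
  then show ?thesis using subspace_add[OF subspace_Cflat[OF L] _ e(2)] by fastforce
qed

lemma Cflat_related_iff:
  assumes L: "linrel scale C" and mn: "(m, n) \<in> C" and "m \<in> Csharp C" "n \<in> Csharp C"
  shows "m \<in> Cflat C \<longleftrightarrow> n \<in> Cflat C"
proof
  assume "m \<in> Cflat C"
  then show "n \<in> Cflat C" using Cflat_step[OF L _ \<open>n \<in> Csharp C\<close> mn] by blast
next
  assume "n \<in> Cflat C"
  moreover have "(n, m) \<in> C\<inverse>" using mn by simp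
  ultimately show "m \<in> Cflat C"
    using Cflat_step[OF linrel_converse[OF L], of n m] \<open>m \<in> Csharp C\<close>
    by (simp add: Cflat_converse Csharp_converse)
qed

lemma mem_coset_self:
  assumes "linrel scale C" shows "m \<in> coset C m"
proof -
  have "m + 0 \<in> coset C m"
    unfolding coset_def using subspace_0[OF subspace_Cflat[OF assms]] by blast
  then show ?thesis by simp
qed

lemma coset_eq_iff:
  assumes L: "linrel scale C" shows "coset C x = coset C y \<longleftrightarrow> x - y \<in> Cflat C"
proof
  assume "coset C x = coset C y"
  then have "x \<in> coset C y" using mem_coset_self[OF L] by blast
  then obtain c where "x = y + c" "c \<in> Cflat C" unfolding coset_def by blast
  then show "x - y \<in> Cflat C" by simp
next
  have coset_subset: "coset C x \<subseteq> coset C y" if "x - y \<in> Cflat C" for x y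
  proof
    fix m assume "m \<in> coset C x"
    then obtain c where "m = x + c" "c \<in> Cflat C" unfolding coset_def by blast
    moreover have "x - y + c \<in> Cflat C"
      using subspace_add[OF subspace_Cflat[OF L] that \<open>c \<in> Cflat C\<close>] .
    ultimately show "m \<in> coset C y"
      unfolding coset_def by (intro CollectI exI[of _ "x - y + c"] conjI) (simp_all add: algebra_simps)
  qed
  assume "x - y \<in> Cflat C"
  moreover then have "y - x \<in> Cflat C" using subspace_neg[OF subspace_Cflat[OF L]] by fastforce
  ultimately show "coset C x = coset C y" using coset_subset by blast
qed

lemma coset_add:
  assumes L: "linrel scale C" shows "coset C (a + b) = set_plus (coset C a) (coset C b)"
proof
  show "coset C (a + b) \<subseteq> set_plus (coset C a) (coset C b)"
  proof
    fix m assume "m \<in> coset C (a + b)"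
    then obtain c where "m = (a + c) + b" "c \<in> Cflat C" unfolding coset_def by (auto simp: ac_simps)
    then show "m \<in> set_plus (coset C a) (coset C b)"
      using mem_coset_self[OF L, of b] unfolding coset_def set_plus_def by blast
  qed
  show "set_plus (coset C a) (coset C b) \<subseteq> coset C (a + b)"
  proof
    fix m assume "m \<in> set_plus (coset C a) (coset C b)"
    then obtain c c' where "m = (a + c) + (b + c')" "c \<in> Cflat C" "c' \<in> Cflat C"
      unfolding set_plus_def coset_def by blast
    moreover from this(2,3) have "c + c' \<in> Cflat C" by (rule subspace_add[OF subspace_Cflat[OF L]])
    ultimately show "m \<in> coset C (a + b)"
      unfolding coset_def by (intro CollectI exI[of _ "c + c'"] conjI) (simp_all add: ac_simps)
  qed
qed

lemma quot_T_coset: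
  assumes L: "linrel scale C" and mn: "(m, n) \<in> C" and "m \<in> Csharp C" "n \<in> Csharp C"
  shows "quot_T C (coset C m) = coset C n"
proof
  show "quot_T C (coset C m) \<subseteq> coset C n"
  proof
    fix m' assume "m' \<in> quot_T C (coset C m)"
    then obtain c c' n' where m': "m' \<in> Csharp C" "m' = c' + n'" and "c \<in> Cflat C" "c' \<in> Cflat C"
      and "(m + c, n') \<in> C"
      unfolding quot_T_def coset_def set_plus_def by blast
    have "(c, n' - n) \<in> C" using linrel_diff[OF L \<open>(m + c, n') \<in> C\<close> mn] by simp
    moreover have "n' - n = (m' - c') - n" using m'(2) by simp
    then have "n' - n \<in> Csharp C"
      using subspace_diff[OF subspace_Csharp[OF L]] m'(1) \<open>c' \<in> Cflat C\<close> \<open>n \<in> Csharp C\<close>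
        Cflat_subset_Csharp[OF L] by (metis subsetD)
    ultimately have "n' - n \<in> Cflat C" using Cflat_step[OF L \<open>c \<in> Cflat C\<close>] by blast
    then have "c' + (n' - n) \<in> Cflat C" using subspace_add[OF subspace_Cflat[OF L] \<open>c' \<in> Cflat C\<close>] by blast
    then show "m' \<in> coset C n"
      unfolding coset_def using m'(2) by (auto simp: algebra_simps intro!: exI[of _ "c' + (n' - n)"])
  qed
  show "coset C n \<subseteq> quot_T C (coset C m)"
  proof
    fix m' assume "m' \<in> coset C n"
    then obtain c where c: "m' = n + c" "c \<in> Cflat C" unfolding coset_def by blast
    then have "m' \<in> Csharp C"
      using subspace_add[OF subspace_Csharp[OF L] \<open>n \<in> Csharp C\<close>] Cflat_subset_Csharp[OF L] by blast
    moreover have "m' \<in> set_plus (Cflat C) (C `` {m})"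
      unfolding set_plus_def using c mn by (auto simp: add.commute)
    ultimately show "m' \<in> quot_T C (coset C m)"
      unfolding quot_T_def using mem_coset_self[OF L, of m] by blast
  qed
qed

lemma quot_carrier_eq_image:
  assumes L: "linrel scale C" and sharp: "Csharp C = set_plus (Cflat C) (range \<rho>)"
  shows "quot_carrier C = range (\<lambda>x. coset C (\<rho> x))"
proof
  show "quot_carrier C \<subseteq> range (\<lambda>x. coset C (\<rho> x))"
  proof
    fix q assume "q \<in> quot_carrier C"
    then obtain c x where "q = coset C (c + \<rho> x)" "c \<in> Cflat C"
      unfolding quot_carrier_def sharp set_plus_def by blast
    then have "q = coset C (\<rho> x)" by (simp add: coset_eq_iff[OF L])
    then show "q \<in> range (\<lambda>x. coset C (\<rho> x))" by blast
  qed
  have "\<rho> x \<in> Csharp C" for x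
    using subspace_0[OF subspace_Cflat[OF L]] unfolding sharp set_plus_def by force
  then show "range (\<lambda>x. coset C (\<rho> x)) \<subseteq> quot_carrier C"
    unfolding quot_carrier_def by blast
qed

end

lemma bij_image_eq_self:
  assumes "bij T" "\<And>x. T x \<in> A \<longleftrightarrow> x \<in> A" shows "T ` A = A"
proof -
  have "T -` A = A" using assms(2) by blast
  then show ?thesis using surj_image_vimage_eq[OF bij_is_surj[OF assms(1)], of A] by simp
qed

lemma reduction_rel_morphism:
  "reduction sM C sX T \<rho> \<Longrightarrow> rel_morphism sX (graph T) sM C \<rho>"
  unfolding reduction_def rel_morphism_def graph_def by auto

lemma reduction_short_exact:
  fixes sM :: "'r::comm_ring_1 \<Rightarrow> 'm::ab_group_add \<Rightarrow> 'm"
    and sX :: "'r \<Rightarrow> 'x::ab_group_add \<Rightarrow> 'x"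
  assumes "module sM" and L: "linrel sM C" and "reduction sM C sX T \<rho>"
  shows "module.subspace sX {x. \<rho> x \<in> Cflat C}"
    and "T ` {x. \<rho> x \<in> Cflat C} = {x. \<rho> x \<in> Cflat C}"
    and "coset C (\<rho> x) \<in> quot_carrier C"
    and "coset C (\<rho> (x + y)) = set_plus (coset C (\<rho> x)) (coset C (\<rho> y))"
    and "coset C (\<rho> (sX r x)) = coset C (sM r (\<rho> x))"
    and "quot_T C (coset C (\<rho> x)) = coset C (\<rho> (T x))"
    and "{x. coset C (\<rho> x) = coset C 0} = {x. \<rho> x \<in> Cflat C}"
    and "range (\<lambda>x. coset C (\<rho> x)) = quot_carrier C"
proof -
  interpret M: module sM by fact
  from \<open>reduction sM C sX T \<rho>\<close> have "bij T" and hom: "module_hom sX sM \<rho>"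
    and sharp: "Csharp C = set_plus (Cflat C) (range \<rho>)" and step: "\<And>x. (\<rho> x, \<rho> (T x)) \<in> C"
    unfolding reduction_def laurent_module_def by auto
  interpret H: module_hom sX sM \<rho> by (rule hom)
  have in_Csharp: "\<rho> x \<in> Csharp C" for x
    using M.subspace_0[OF M.subspace_Cflat[OF L]] unfolding sharp set_plus_def by force
  have quot: "quot_carrier C = range (\<lambda>x. coset C (\<rho> x))"
    by (rule M.quot_carrier_eq_image[OF L sharp])
  show "module.subspace sX {x. \<rho> x \<in> Cflat C}"
    by (rule H.subspace_linear_preimage[OF M.subspace_Cflat[OF L]])
  show "T ` {x. \<rho> x \<in> Cflat C} = {x. \<rho> x \<in> Cflat C}"
    using M.Cflat_related_iff[OF L step in_Csharp in_Csharp] by (intro bij_image_eq_self[OF \<open>bij T\<close>]) simp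
  show "coset C (\<rho> x) \<in> quot_carrier C" using quot by blast
  show "coset C (\<rho> (x + y)) = set_plus (coset C (\<rho> x)) (coset C (\<rho> y))"
    unfolding H.add by (rule M.coset_add[OF L])
  show "coset C (\<rho> (sX r x)) = coset C (sM r (\<rho> x))" by (simp add: H.scale)
  show "quot_T C (coset C (\<rho> x)) = coset C (\<rho> (T x))"
    by (rule M.quot_T_coset[OF L step in_Csharp in_Csharp])
  show "{x. coset C (\<rho> x) = coset C 0} = {x. \<rho> x \<in> Cflat C}"
    by (simp add: M.coset_eq_iff[OF L])
  show "range (\<lambda>x. coset C (\<rho> x)) = quot_carrier C" using quot ..
qed

theorem lemma4p9:
  fixes sM :: "'r::comm_ring_1 \<Rightarrow> 'm::ab_group_add \<Rightarrow> 'm"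
    and sX :: "'r \<Rightarrow> 'x::ab_group_add \<Rightarrow> 'x"
    and C :: "('m \<times> 'm) set"
    and T :: "'x \<Rightarrow> 'x"
    and \<rho> :: "'x \<Rightarrow> 'm"
  assumes "module sM"
    and "linrel sM C"
    and red: "reduction sM C sX T \<rho>"
  shows "rel_morphism sX (graph T) sM C \<rho>
    \<and> (meets_in_radical C sX \<rho> \<longrightarrow>
         module.subspace sX (rad sX)
       \<and> T ` rad sX = rad sX
       \<and> (\<forall>x. coset C (\<rho> x) \<in> quot_carrier C)
       \<and> (\<forall>x y. coset C (\<rho> (x + y)) = set_plus (coset C (\<rho> x)) (coset C (\<rho> y)))
       \<and> (\<forall>r x. coset C (\<rho> (sX r x)) = coset C (sM r (\<rho> x)))
       \<and> (\<forall>x. quot_T C (coset C (\<rho> x)) = coset C (\<rho> (T x)))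
       \<and> {x. coset C (\<rho> x) = coset C 0} = rad sX
       \<and> (\<lambda>x. coset C (\<rho> x)) ` UNIV = quot_carrier C)"
proof -
  have "rel_morphism sX (graph T) sM C \<rho>" using red by (rule reduction_rel_morphism)
  moreover have "rad sX = {x. \<rho> x \<in> Cflat C}" if "meets_in_radical C sX \<rho>"
    using that unfolding meets_in_radical_def by simp
  ultimately show ?thesis using reduction_short_exact[OF assms] by simp
qed

end
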